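(* Let $(X,u)$ and $(Y,v)$ be Čech closure spaces, let $Y^X$ be the set of all continuous maps $(X,u)\to(Y,v)$, and let $\{\sigma_\alpha\}$ be a collection of Čech closure operators on $Y^X$. (1) If every $\sigma_\alpha$ is proper, then the infimum $\bigwedge\sigma_\alpha$ and the supremum $\bigvee\sigma_\alpha$ are proper. (2) If every $\sigma_\alpha$ is admissible, then the supremum $\bigvee\sigma_\alpha$ is admissible.
   Context: A Čech closure space $(X,u)$ is a set $X$ with an operator $u:\mathcal P(X)\to\mathcal P(X)$ satisfying $u(\emptyset)=\emptyset$, $A\subset u(A)$, and $u(A\cup B)=u(A)\cup u(B)$. The interior is $\mathrm{int}_u A=X\setminus u(X\setminus A)$; $U$ is a neighbourhood of $x$ if $x\in\mathrm{int}_uU$; $\mathcal N_\alpha(f)$ denotes the neighbourhood system of $f$ for $\sigma_\alpha$. A closure operator is determined by neighbourhood bases (families at each point that are nonempty, contain the point, and are downward directed) or subbases (nonempty families of sets containing the point, whose finite intersections form a base), via $u(A)=\{x:$ every basic neighbourhood of $x$ meets $A\}$. The infimum $\bigwedge\sigma_\alpha$ is the closure operator on $Y^X$ for which $\bigcap_\alpha\mathcal N_\alpha(f)$ is a neighbourhood base at each $f$; the supremum $\bigvee\sigma_\alpha$ is the closure operator for which $\bigcup_\alpha\mathcal N_\alpha(f)$ is a neighbourhood subbase at each $f$. A map $f:(X,u)\to(Y,v)$ is continuous if $f(u(A))\subset v(f(A))$ for all $A$. The product $(Z,w)\times(X,u)$ is $Z\times X$ with the closure operator for which the sets $W\times U$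 ($W$ a neighbourhood of $z$, $U$ of $x$) form a neighbourhood base at $(z,x)$. For $g:Z\times X\to Y$, $g^*(z)(x)=g(z,x)$. A closure operator $\sigma$ on $Y^X$ is proper if for every closure space $(Z,w)$, continuity of $g:(Z,w)\times(X,u)\to(Y,v)$ implies continuity of $g^*:(Z,w)\to(Y^X,\sigma)$; it is admissible if for every closure space $(Z,w)$ and every $g:Z\times X\to Y$ with $g^*(Z)\subset Y^X$, continuity of $g^*:(Z,w)\to(Y^X,\sigma)$ implies continuity of $g$. *)

theory Defs
  imports Main
begin

definition cech :: "('a set \<Rightarrow> 'a set) \<Rightarrow> bool" where
  "cech u \<longleftrightarrow> u {} = {} \<and> (\<forall>A. A \<subseteq> u A) \<and> (\<forall>A B. u (A \<union> B) = u A \<union> u B)"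

definition cech_on :: "'a set \<Rightarrow> ('a set \<Rightarrow> 'a set) \<Rightarrow> bool" where
  "cech_on C s \<longleftrightarrow> s {} = {} \<and> (\<forall>A. A \<subseteq> C \<longrightarrow> A \<subseteq> s A \<and> s A \<subseteq> C)
     \<and> (\<forall>A B. A \<subseteq> C \<longrightarrow> B \<subseteq> C \<longrightarrow> s (A \<union> B) = s A \<union> s B)"

definition cinterior :: "'a set \<Rightarrow> ('a set \<Rightarrow> 'a set) \<Rightarrow> 'a set \<Rightarrow> 'a set" where
  "cinterior C s A = C - s (C - A)"

definition cnhds :: "'a set \<Rightarrow> ('a set \<Rightarrow> 'a set) \<Rightarrow> 'a \<Rightarrow> 'a set set" where
  "cnhds C s x = {U. U \<subseteq> C \<and> x \<in> cinterior C s U}"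

definition closure_from_base :: "'a set \<Rightarrow> ('a \<Rightarrow> 'a set set) \<Rightarrow> 'a set \<Rightarrow> 'a set" where
  "closure_from_base C B A = {x \<in> C. \<forall>U \<in> B x. U \<inter> A \<noteq> {}}"

definition closure_from_subbase :: "'a set \<Rightarrow> ('a \<Rightarrow> 'a set set) \<Rightarrow> 'a set \<Rightarrow> 'a set" where
  "closure_from_subbase C S =
     closure_from_base C (\<lambda>x. {\<Inter>F | F. finite F \<and> F \<noteq> {} \<and> F \<subseteq> S x})"

definition cinf :: "'a set \<Rightarrow> 'i set \<Rightarrow> ('i \<Rightarrow> 'a set \<Rightarrow> 'a set) \<Rightarrow> 'a set \<Rightarrow> 'a set" where
  "cinf C I s = closure_from_base C (\<lambda>f. \<Inter>\<alpha>\<in>I. cnhds C (s \<alpha>) f)"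

definition csup :: "'a set \<Rightarrow> 'i set \<Rightarrow> ('i \<Rightarrow> 'a set \<Rightarrow> 'a set) \<Rightarrow> 'a set \<Rightarrow> 'a set" where
  "csup C I s = closure_from_subbase C (\<lambda>f. \<Union>\<alpha>\<in>I. cnhds C (s \<alpha>) f)"

definition ccont :: "('a set \<Rightarrow> 'a set) \<Rightarrow> ('b set \<Rightarrow> 'b set) \<Rightarrow> ('a \<Rightarrow> 'b) \<Rightarrow> bool" where
  "ccont u v f \<longleftrightarrow> (\<forall>A. f ` u A \<subseteq> v (f ` A))"

definition ccont_into :: "('a set \<Rightarrow> 'a set) \<Rightarrow> 'b set \<Rightarrow> ('b set \<Rightarrow> 'b set) \<Rightarrow> ('a \<Rightarrow> 'b) \<Rightarrow> bool" where
  "ccont_into w C s h \<longleftrightarrow> range h \<subseteq> C \<and> (\<forall>A. h ` w A \<subseteq> s (h ` A))"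

definition cnhd :: "('a set \<Rightarrow> 'a set) \<Rightarrow> 'a \<Rightarrow> 'a set \<Rightarrow> bool" where
  "cnhd u x U \<longleftrightarrow> x \<in> - u (- U)"

definition prod_closure ::
  "('z set \<Rightarrow> 'z set) \<Rightarrow> ('x set \<Rightarrow> 'x set) \<Rightarrow> ('z \<times> 'x) set \<Rightarrow> ('z \<times> 'x) set" where
  "prod_closure w u = closure_from_base UNIV
     (\<lambda>(z, x). {W \<times> U | W U. cnhd w z W \<and> cnhd u x U})"

definition cmaps :: "('x set \<Rightarrow> 'x set) \<Rightarrow> ('y set \<Rightarrow> 'y set) \<Rightarrow> ('x \<Rightarrow> 'y) set" where
  "cmaps u v = {f. ccont u v f}"

text \<open>Proper and admissible closure operators on Y^X; the test spaces (Z,w) range over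
  all closure spaces whose underlying set is the type 'z.\<close>
definition proper :: "'z itself \<Rightarrow> ('x set \<Rightarrow> 'x set) \<Rightarrow> ('y set \<Rightarrow> 'y set)
    \<Rightarrow> (('x \<Rightarrow> 'y) set \<Rightarrow> ('x \<Rightarrow> 'y) set) \<Rightarrow> bool" where
  "proper _ u v s \<longleftrightarrow> (\<forall>(w :: 'z set \<Rightarrow> 'z set) (g :: 'z \<times> 'x \<Rightarrow> 'y).
      cech w \<longrightarrow> ccont (prod_closure w u) v g \<longrightarrow> ccont_into w (cmaps u v) s (curry g))"

definition admissible :: "'z itself \<Rightarrow> ('x set \<Rightarrow> 'x set) \<Rightarrow> ('y set \<Rightarrow> 'y set)
    \<Rightarrow> (('x \<Rightarrow> 'y) set \<Rightarrow> ('x \<Rightarrow> 'y) set) \<Rightarrow> bool" where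
  "admissible _ u v s \<longleftrightarrow> (\<forall>(w :: 'z set \<Rightarrow> 'z set) (g :: 'z \<times> 'x \<Rightarrow> 'y).
      cech w \<longrightarrow> range (curry g) \<subseteq> cmaps u v \<longrightarrow> ccont_into w (cmaps u v) s (curry g)
        \<longrightarrow> ccont (prod_closure w u) v g)"

end

theory Submission
  imports Defs
begin

text \<open>Properness is preserved when the closure on \<open>Y\<^sup>X\<close> is made coarser (larger closures) and
  admissibility when it is made finer, since continuity of \<open>g\<^sup>*\<close> behaves the opposite way.
  Each \<open>\<sigma>\<^sub>\<alpha>\<close> is finer than the infimum and coarser than the supremum, which gives all statements
  except properness of the supremum. For that one, a subbasic neighbourhood of \<open>g\<^sup>* z\<close> for the
  supremum is a finite intersection of \<open>\<sigma>\<^sub>\<alpha>\<close>-neighbourhoods; their preimages under the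
  \<open>\<sigma>\<^sub>\<alpha>\<close>-continuous map \<open>g\<^sup>*\<close> are neighbourhoods of \<open>z\<close>, and so is their finite intersection.\<close>

lemma cech_mono:
  assumes "cech w" "A \<subseteq> B"
  shows "w A \<subseteq> w B"
proof -
  have "w B = w A \<union> w B"
    using assms unfolding cech_def by (metis Un_absorb1)
  then show ?thesis by blast
qed

lemma cech_on_mono:
  assumes "cech_on C s" "A \<subseteq> B" "B \<subseteq> C"
  shows "s A \<subseteq> s B"
proof -
  have "s B = s A \<union> s B"
    using assms unfolding cech_on_def by (metis Un_absorb1 order_trans)
  then show ?thesis by blast
qed

lemma cech_on_subset_carrier: "cech_on C s \<Longrightarrow> A \<subseteq> C \<Longrightarrow> s A \<subseteq> C"
  unfolding cech_on_def by blast

lemma cnhd_Inter: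
  assumes "cech w" "finite F" "\<forall>U\<in>F. cnhd w z U"
  shows "cnhd w z (\<Inter>F)"
  using assms(2,3)
proof (induction F rule: finite_induct)
  case empty
  then show ?case using assms(1) by (simp add: cech_def cnhd_def)
next
  case (insert U F)
  have "- \<Inter>(insert U F) = - U \<union> - \<Inter>F" by blast
  with insert show ?case using assms(1) by (simp add: cech_def cnhd_def)
qed

lemma closure_le_cinf:
  assumes "\<alpha> \<in> I" "cech_on C (\<sigma> \<alpha>)" "A \<subseteq> C"
  shows "\<sigma> \<alpha> A \<subseteq> cinf C I \<sigma> A"
proof
  fix f assume f: "f \<in> \<sigma> \<alpha> A"
  have "U \<inter> A \<noteq> {}" if "U \<in> (\<Inter>\<beta>\<in>I. cnhds C (\<sigma> \<beta>) f)" for U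
  proof
    assume "U \<inter> A = {}"
    then have "\<sigma> \<alpha> A \<subseteq> \<sigma> \<alpha> (C - U)"
      using assms(3) by (intro cech_on_mono[OF assms(2)]) auto
    moreover have "f \<notin> \<sigma> \<alpha> (C - U)"
      using that assms(1) unfolding cnhds_def cinterior_def by blast
    ultimately show False using f by blast
  qed
  moreover have "f \<in> C" using f cech_on_subset_carrier[OF assms(2,3)] by blast
  ultimately show "f \<in> cinf C I \<sigma> A"
    unfolding cinf_def closure_from_base_def by blast
qed

lemma csup_le_closure:
  assumes "\<alpha> \<in> I" "A \<subseteq> C"
  shows "csup C I \<sigma> A \<subseteq> \<sigma> \<alpha> A"
proof
  fix f assume f: "f \<in> csup C I \<sigma> A"
  show "f \<in> \<sigma> \<alpha> A"
  proof (rule ccontr)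
    assume "f \<notin> \<sigma> \<alpha> A"
    moreover have "f \<in> C" and "C - (C - A) = A"
      using f assms(2) unfolding csup_def closure_from_subbase_def closure_from_base_def by auto
    ultimately have "C - A \<in> cnhds C (\<sigma> \<alpha>) f"
      unfolding cnhds_def cinterior_def by auto
    then have "\<Inter>{C - A} \<in> {\<Inter>F | F. finite F \<and> F \<noteq> {} \<and> F \<subseteq> (\<Union>\<alpha>\<in>I. cnhds C (\<sigma> \<alpha>) f)}"
      using assms(1) by blast
    with f show False
      unfolding csup_def closure_from_subbase_def closure_from_base_def by auto
  qed
qed

lemma ccont_into_coarser:
  assumes "ccont_into w C s h" "\<And>A. A \<subseteq> C \<Longrightarrow> s A \<subseteq> s' A"
  shows "ccont_into w C s' h"
proof -
  have range: "range h \<subseteq> C" using assms(1) unfolding ccont_into_def by blast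
  have "h ` w A \<subseteq> s' (h ` A)" for A
  proof -
    have "h ` w A \<subseteq> s (h ` A)" using assms(1) unfolding ccont_into_def by blast
    also have "\<dots> \<subseteq> s' (h ` A)" using range by (intro assms(2)) blast
    finally show ?thesis .
  qed
  with range show ?thesis unfolding ccont_into_def by blast
qed

lemma ccont_into_vimage_cnhds:
  assumes "cech_on C s" "ccont_into w C s h" "U \<in> cnhds C s (h z)"
  shows "cnhd w z (h -` U)"
  unfolding cnhd_def
proof
  assume "z \<in> w (- (h -` U))"
  then have "h z \<in> s (h ` (- (h -` U)))"
    using assms(2) unfolding ccont_into_def by blast
  moreover have "h ` (- (h -` U)) \<subseteq> C - U"
    using assms(2) unfolding ccont_into_def by blast
  ultimately have "h z \<in> s (C - U)"
    using cech_on_mono[OF assms(1)] by blast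
  with assms(3) show False unfolding cnhds_def cinterior_def by blast
qed

lemma ccont_into_csup:
  assumes "cech w" "\<alpha>\<^sub>0 \<in> I" "\<forall>\<alpha>\<in>I. cech_on C (\<sigma> \<alpha>) \<and> ccont_into w C (\<sigma> \<alpha>) h"
  shows "ccont_into w C (csup C I \<sigma>) h"
proof -
  have range: "range h \<subseteq> C" using assms(2,3) unfolding ccont_into_def by blast
  have "h z \<in> csup C I \<sigma> (h ` A)" if z: "z \<in> w A" for z A
  proof -
    have "V \<inter> h ` A \<noteq> {}"
      if "finite F" "F \<subseteq> (\<Union>\<alpha>\<in>I. cnhds C (\<sigma> \<alpha>) (h z))" and V: "V = \<Inter>F" for F V
    proof -
      have "\<forall>U\<in>F. cnhd w z (h -` U)"
        using that(2) assms(3) ccont_into_vimage_cnhds by fast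
      then have "cnhd w z (\<Inter>((-`) h ` F))"
        using cnhd_Inter[OF assms(1)] \<open>finite F\<close> by blast
      moreover have "\<Inter>((-`) h ` F) = h -` V" using V by auto
      ultimately have "cnhd w z (h -` V)" by simp
      then have "\<not> A \<subseteq> - (h -` V)"
        using z cech_mono[OF assms(1)] unfolding cnhd_def by blast
      then show ?thesis by blast
    qed
    then show ?thesis
      using range unfolding csup_def closure_from_subbase_def closure_from_base_def by blast
  qed
  with range show ?thesis unfolding ccont_into_def by blast
qed

lemma proper_coarser:
  fixes u :: "'x set \<Rightarrow> 'x set" and v :: "'y set \<Rightarrow> 'y set"
  assumes "proper TYPE('z) u v s" "\<And>A. A \<subseteq> cmaps u v \<Longrightarrow> s A \<subseteq> s' A"
  shows "proper TYPE('z) u v s'"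
  unfolding proper_def
proof (intro allI impI)
  fix w :: "'z set \<Rightarrow> 'z set" and g :: "'z \<times> 'x \<Rightarrow> 'y"
  assume "cech w" "ccont (prod_closure w u) v g"
  with assms(1) have "ccont_into w (cmaps u v) s (curry g)" unfolding proper_def by blast
  then show "ccont_into w (cmaps u v) s' (curry g)" using assms(2) by (rule ccont_into_coarser)
qed

lemma admissible_finer:
  fixes u :: "'x set \<Rightarrow> 'x set" and v :: "'y set \<Rightarrow> 'y set"
  assumes "admissible TYPE('z) u v s" "\<And>A. A \<subseteq> cmaps u v \<Longrightarrow> s' A \<subseteq> s A"
  shows "admissible TYPE('z) u v s'"
  unfolding admissible_def
proof (intro allI impI)
  fix w :: "'z set \<Rightarrow> 'z set" and g :: "'z \<times> 'x \<Rightarrow> 'y"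
  assume "cech w" "range (curry g) \<subseteq> cmaps u v" "ccont_into w (cmaps u v) s' (curry g)"
  moreover from this(3) have "ccont_into w (cmaps u v) s (curry g)"
    using assms(2) by (rule ccont_into_coarser)
  ultimately show "ccont (prod_closure w u) v g" using assms(1) unfolding admissible_def by blast
qed

lemma proper_cinf:
  assumes "\<alpha> \<in> I" "cech_on (cmaps u v) (\<sigma> \<alpha>)" "proper TYPE('z) u v (\<sigma> \<alpha>)"
  shows "proper TYPE('z) u v (cinf (cmaps u v) I \<sigma>)"
  using assms(3) closure_le_cinf[where \<sigma> = \<sigma>, OF assms(1,2)] by (rule proper_coarser)

lemma proper_csup:
  fixes u :: "'x set \<Rightarrow> 'x set" and v :: "'y set \<Rightarrow> 'y set"
  assumes "\<alpha>\<^sub>0 \<in> I" "\<forall>\<alpha>\<in>I. cech_on (cmaps u v) (\<sigma> \<alpha>) \<and> proper TYPE('z) u v (\<sigma> \<alpha>)"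
  shows "proper TYPE('z) u v (csup (cmaps u v) I \<sigma>)"
  unfolding proper_def
proof (intro allI impI)
  fix w :: "'z set \<Rightarrow> 'z set" and g :: "'z \<times> 'x \<Rightarrow> 'y"
  assume "cech w" "ccont (prod_closure w u) v g"
  with assms(2) have "\<forall>\<alpha>\<in>I. cech_on (cmaps u v) (\<sigma> \<alpha>) \<and> ccont_into w (cmaps u v) (\<sigma> \<alpha>) (curry g)"
    unfolding proper_def by blast
  with \<open>cech w\<close> assms(1) show "ccont_into w (cmaps u v) (csup (cmaps u v) I \<sigma>) (curry g)"
    by (rule ccont_into_csup)
qed

lemma admissible_csup:
  assumes "\<alpha> \<in> I" "admissible TYPE('z) u v (\<sigma> \<alpha>)"
  shows "admissible TYPE('z) u v (csup (cmaps u v) I \<sigma>)"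
  using assms(2) csup_le_closure[where \<sigma> = \<sigma>, OF assms(1)] by (rule admissible_finer)

theorem corollary2:
  fixes u :: "'x set \<Rightarrow> 'x set" and v :: "'y set \<Rightarrow> 'y set"
    and I :: "'i set" and \<sigma> :: "'i \<Rightarrow> ('x \<Rightarrow> 'y) set \<Rightarrow> ('x \<Rightarrow> 'y) set"
  assumes "cech u" and "cech v" and "I \<noteq> {}"
    and "\<forall>\<alpha>\<in>I. cech_on (cmaps u v) (\<sigma> \<alpha>)"
  shows "((\<forall>\<alpha>\<in>I. proper TYPE('z) u v (\<sigma> \<alpha>)) \<longrightarrow>
            proper TYPE('z) u v (cinf (cmaps u v) I \<sigma>) \<and>
            proper TYPE('z) u v (csup (cmaps u v) I \<sigma>))
       \<and> ((\<forall>\<alpha>\<in>I. admissible TYPE('z) u v (\<sigma> \<alpha>)) \<longrightarrow>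
            admissible TYPE('z) u v (csup (cmaps u v) I \<sigma>))"
proof (intro conjI impI)
  obtain \<alpha> where \<alpha>: "\<alpha> \<in> I" using \<open>I \<noteq> {}\<close> by blast
  {
    assume proper: "\<forall>\<alpha>\<in>I. proper TYPE('z) u v (\<sigma> \<alpha>)"
    show "proper TYPE('z) u v (cinf (cmaps u v) I \<sigma>)"
      using \<alpha> assms(4) proper by (intro proper_cinf) auto
    show "proper TYPE('z) u v (csup (cmaps u v) I \<sigma>)"
      using \<alpha> assms(4) proper by (intro proper_csup) auto
  }
  show "admissible TYPE('z) u v (csup (cmaps u v) I \<sigma>)"
    if "\<forall>\<alpha>\<in>I. admissible TYPE('z) u v (\<sigma> \<alpha>)"
    using \<alpha> that by (intro admissible_csup) auto
qed

end
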